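(* For every nonnegative integer $n$, $$\sum_{k=0}^{\infty}(-1)^k(4k+1)\,\frac{(-n)_k^2\,(\tfrac12)_k}{k!\,(n+\tfrac32)_k^2}=\left(\frac14\right)^n\frac{(\tfrac32)_n^2}{(\tfrac54)_n(\tfrac34)_n}.$$ (The sum is finite, since $(-n)_k=0$ for $k>n$.)
   Context: $(a)_j=\Gamma(a+j)/\Gamma(a)=a(a+1)\cdots(a+j-1)$ denotes the rising factorial (Pochhammer symbol), with $(a)_0=1$. *)

theory Defs
  imports "HOL-Analysis.Analysis"
begin

end

theory Submission
  imports Defs
begin

(* Proof idea (a WZ-style telescoping in the parameter).  Regard the summand as a function
   ws_term x k of a real parameter x >= 0; for x = n it vanishes for k > n, so the series is
   a finite sum S(n).  We show that the sums satisfy the first-order recurrence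
   S(n+1) = step_ratio n * S(n) with step_ratio x = (2x+3)^2 / ((4x+3)(4x+5)), which is also
   the ratio of consecutive values of the closed form; induction on n then gives the result.
   The recurrence comes from a contiguous relation
     ws_term (x+1) k - step_ratio x * ws_term x k = G x (k+1) - G x k,
   where the certificate G x k is ws_term (x+1) k times an explicit rational function
   (found by Zeilberger's algorithm).  Writing ws_term x k, ws_term (x+1) k and
   ws_term (x+1) (k+1) as one common hypergeometric factor ws_base x k times rational
   factors reduces the contiguous relation to a rational-function identity. *)

definition ws_term :: "real \<Rightarrow> nat \<Rightarrow> real" where
  "ws_term x k = (-1) ^ k * (4 * real k + 1) * (pochhammer (- x) k) ^ 2 * pochhammer (1/2) k
     / (fact k * (pochhammer (x + 3/2) k) ^ 2)"

(* Ratio S(x+1)/S(x) of consecutive sums, and of consecutive values of the closed form. *)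
definition step_ratio :: "real \<Rightarrow> real" where
  "step_ratio x = (2 * x + 3) ^ 2 / ((4 * x + 5) * (4 * x + 3))"

(* Numerator polynomial of the WZ certificate, as produced by Zeilberger's algorithm. *)
definition cert_poly :: "real \<Rightarrow> real \<Rightarrow> real" where
  "cert_poly x k = 8*k^4 + (20 + 16*x)*k^3 + (-10 - 24*x - 16*x^2)*k^2
     + (-57 - 164*x - 156*x^2 - 48*x^3)*k + (-36 - 138*x - 190*x^2 - 112*x^3 - 24*x^4)"

definition cert_rational :: "real \<Rightarrow> real \<Rightarrow> real" where
  "cert_rational x k = k * cert_poly x k / ((4*k + 1) * (4*x + 3) * (4*x + 5) * (x + 1)^2)"

definition certificate :: "real \<Rightarrow> nat \<Rightarrow> real" where
  "certificate x k = ws_term (x + 1) k * cert_rational x (real k)"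

(* Common hypergeometric factor of ws_term x k, ws_term (x+1) k and ws_term (x+1) (k+1). *)
definition ws_base :: "real \<Rightarrow> nat \<Rightarrow> real" where
  "ws_base x k = (-1) ^ k * (pochhammer (- x - 1) k) ^ 2 * pochhammer (1/2) k
     / (fact k * (pochhammer (x + 3/2) k) ^ 2)"

lemma pochhammer_shift:
  fixes a :: "'a::comm_semiring_1"
  shows "a * pochhammer (a + 1) k = (a + of_nat k) * pochhammer a k"
  by (metis pochhammer_rec pochhammer_rec')

lemma ws_term_eq_base:
  assumes "x \<ge> 0"
  shows "ws_term x k = ws_base x k * ((4 * real k + 1) * ((x + 1 - real k) / (x + 1)) ^ 2)"
proof -
  have "(- x - 1) * pochhammer (- x) k = (- x - 1 + real k) * pochhammer (- x - 1) k"
    using pochhammer_shift[of "- x - 1" k] by simp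
  then have "pochhammer (- x) k = (x + 1 - real k) / (x + 1) * pochhammer (- x - 1) k"
    using assms by (simp add: field_simps)
  then show ?thesis
    unfolding ws_term_def ws_base_def by (simp add: field_simps power2_eq_square)
qed

lemma pochhammer_five_halves:
  assumes "x \<ge> 0"
  shows "pochhammer (x + 5/2) k = (x + 3/2 + real k) / (x + 3/2) * pochhammer (x + 3/2) k"
proof -
  have "(x + 3/2) * pochhammer (x + 5/2) k = (x + 3/2 + real k) * pochhammer (x + 3/2) k"
    using pochhammer_shift[of "x + 3/2" k] by (simp add: add.assoc)
  then show ?thesis using assms by (simp add: field_simps)
qed

lemma ws_term_shift_eq_base:
  assumes "x \<ge> 0"
  shows "ws_term (x + 1) k = ws_base x k * ((4 * real k + 1) * ((x + 3/2) / (x + 3/2 + real k)) ^ 2)"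
proof -
  define Q where "Q = pochhammer (x + 3/2) k"
  have "Q > 0" unfolding Q_def using assms by (intro pochhammer_pos) auto
  have "ws_term (x + 1) k = (-1) ^ k * (4 * real k + 1) * (pochhammer (- x - 1) k) ^ 2
      * pochhammer (1/2) k / (fact k * ((x + 3/2 + real k) / (x + 3/2) * Q) ^ 2)"
    unfolding ws_term_def Q_def pochhammer_five_halves[OF assms, symmetric]
    by (simp add: add.assoc)
  also have "\<dots> = ws_base x k * ((4 * real k + 1) * ((x + 3/2) / (x + 3/2 + real k)) ^ 2)"
    unfolding ws_base_def Q_def[symmetric] using \<open>Q > 0\<close> assms
    by (simp add: field_simps power2_eq_square)
  finally show ?thesis .
qed

lemma ws_term_Suc:
  assumes "y \<ge> 0"
  shows "ws_term y (Suc k) = ws_term y k * (- (4 * real k + 5) / (4 * real k + 1))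
     * (real k - y) ^ 2 * (real k + 1/2) / ((real k + 1) * (y + 3/2 + real k) ^ 2)"
proof -
  define Q where "Q = pochhammer (y + 3/2) k"
  have "Q > 0" unfolding Q_def using assms by (intro pochhammer_pos) auto
  moreover have "y + 3/2 + real k > 0" "4 * real k + 1 > 0" using assms by simp_all
  ultimately show ?thesis
    unfolding ws_term_def pochhammer_Suc fact_Suc Q_def[symmetric]
    by (simp add: divide_simps) algebra
qed

definition unshifted_factor :: "real \<Rightarrow> real \<Rightarrow> real" where
  "unshifted_factor x k = (4 * k + 1) * ((x + 1 - k) / (x + 1)) ^ 2"

definition shifted_factor :: "real \<Rightarrow> real \<Rightarrow> real" where
  "shifted_factor x k = (4 * k + 1) * ((x + 3/2) / (x + 3/2 + k)) ^ 2"

definition shifted_factor_Suc :: "real \<Rightarrow> real \<Rightarrow> real" where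
  "shifted_factor_Suc x k = shifted_factor x k * (- (4 * k + 5) / (4 * k + 1))
     * (k - x - 1) ^ 2 * (k + 1/2) / ((k + 1) * (x + 5/2 + k) ^ 2)"

(* The contiguous relation divided by ws_base: a pure rational-function identity. *)
lemma certificate_identity:
  fixes x k :: real
  assumes "x \<ge> 0" "k \<ge> 0"
  shows "shifted_factor x k - step_ratio x * unshifted_factor x k
       = shifted_factor_Suc x k * cert_rational x (k + 1) - shifted_factor x k * cert_rational x k"
proof -
  have "x + 3/2 + k > 0" "x + 5/2 + k > 0" "k + 1 > 0" "4 * k + 1 > 0" "4 * k + 5 > 0"
    "4 * x + 3 > 0" "4 * x + 5 > 0" "x + 1 > 0"
    using assms by auto
  then show ?thesis
    unfolding unshifted_factor_def shifted_factor_def shifted_factor_Suc_def step_ratio_def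
      cert_rational_def cert_poly_def
    by (simp add: divide_simps) algebra
qed

lemma contiguous_relation:
  assumes "x \<ge> 0"
  shows "ws_term (x + 1) k - step_ratio x * ws_term x k = certificate x (Suc k) - certificate x k"
proof -
  have shifts: "real k - (x + 1) = real k - x - 1" "x + 1 + 3/2 + real k = x + 5/2 + real k"
    by simp_all
  have "x + 1 \<ge> 0" using assms by simp
  have "ws_term (x + 1) (Suc k) = ws_base x k * shifted_factor_Suc x (real k)"
    unfolding ws_term_Suc[OF \<open>x + 1 \<ge> 0\<close>] ws_term_shift_eq_base[OF assms, of k] shifts
    by (simp add: shifted_factor_def shifted_factor_Suc_def)
  then have "certificate x (Suc k) - certificate x k
      = ws_base x k * (shifted_factor_Suc x (real k) * cert_rational x (real k + 1)
                       - shifted_factor x (real k) * cert_rational x (real k))"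
    unfolding certificate_def ws_term_shift_eq_base[OF assms] shifted_factor_def
    by (simp add: algebra_simps)
  also have "\<dots> = ws_base x k * (shifted_factor x (real k) - step_ratio x * unshifted_factor x (real k))"
    using certificate_identity[OF assms, of "real k"] by simp
  also have "\<dots> = ws_term (x + 1) k - step_ratio x * ws_term x k"
    unfolding ws_term_eq_base[OF assms] ws_term_shift_eq_base[OF assms] unshifted_factor_def shifted_factor_def
    by (simp add: algebra_simps)
  finally show ?thesis by simp
qed

lemma partial_sum_contiguous:
  assumes "x \<ge> 0"
  shows "(\<Sum>k<m. ws_term (x + 1) k) = step_ratio x * (\<Sum>k<m. ws_term x k) + certificate x m"
proof (induction m)
  case 0
  show ?case by (simp add: certificate_def cert_rational_def)
next
  case (Suc m)
  then show ?case using contiguous_relation[OF assms, of m] by (simp add: algebra_simps)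
qed

lemma ws_term_vanishes: "n < k \<Longrightarrow> ws_term (real n) k = 0"
  unfolding ws_term_def using pochhammer_of_nat_eq_0_iff[of n k, where 'a=real] by simp

definition closed_form :: "nat \<Rightarrow> real" where
  "closed_form n = (1/4) ^ n * (pochhammer (3/2) n) ^ 2 / (pochhammer (5/4) n * pochhammer (3/4) n)"

lemma closed_form_Suc: "closed_form (Suc n) = step_ratio (real n) * closed_form n"
proof -
  have "pochhammer (5/4::real) n > 0" "pochhammer (3/4::real) n > 0"
    by (auto intro: pochhammer_pos)
  then have "closed_form (Suc n)
      = (1/4) * (3/2 + real n) ^ 2 / ((5/4 + real n) * (3/4 + real n)) * closed_form n"
    unfolding closed_form_def pochhammer_Suc by (simp add: field_simps power2_eq_square)
  also have "(1/4) * (3/2 + real n) ^ 2 / ((5/4 + real n) * (3/4 + real n)) = step_ratio (real n)"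
  proof -
    have "5/4 + real n > 0" "3/4 + real n > 0" "4 * real n + 5 > 0" "4 * real n + 3 > 0"
      by simp_all
    then show ?thesis unfolding step_ratio_def by (simp add: divide_simps) algebra
  qed
  finally show ?thesis .
qed

(* The (finite) sum equals the closed form: both start at 1 and obey the same recurrence,
   the certificate term vanishing because ws_term (n+1) (n+2) = 0. *)
lemma finite_sum: "(\<Sum>k<Suc n. ws_term (real n) k) = closed_form n"
proof (induction n)
  case 0
  show ?case by (simp add: ws_term_def closed_form_def)
next
  case (Suc n)
  have "certificate (real n) (Suc (Suc n)) = 0"
    using ws_term_vanishes[of "Suc n" "Suc (Suc n)"] by (simp add: certificate_def add.commute)
  moreover have "(\<Sum>k<Suc (Suc n). ws_term (real n) k) = (\<Sum>k<Suc n. ws_term (real n) k)"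
    using ws_term_vanishes[of n "Suc n"] by simp
  ultimately have "(\<Sum>k<Suc (Suc n). ws_term (real n + 1) k)
      = step_ratio (real n) * (\<Sum>k<Suc n. ws_term (real n) k)"
    using partial_sum_contiguous[of "real n" "Suc (Suc n)"] by simp
  then show ?case using Suc.IH closed_form_Suc by (simp add: add.commute)
qed

theorem theorem1:
  fixes n :: nat
  shows "(\<lambda>k. (-1) ^ k * (4 * real k + 1) * (pochhammer (- real n) k) ^ 2 * pochhammer (1/2) k
            / (fact k * (pochhammer (real n + 3/2) k) ^ 2))
         sums ((1/4) ^ n * (pochhammer (3/2) n) ^ 2 / (pochhammer (5/4) n * pochhammer (3/4) n))"
proof -
  have "ws_term (real n) sums (\<Sum>k<Suc n. ws_term (real n) k)"
    by (rule sums_finite) (auto intro: ws_term_vanishes)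
  then have "ws_term (real n) sums closed_form n" by (simp only: finite_sum)
  then show ?thesis unfolding closed_form_def ws_term_def .
qed

end
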